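(* Let $(a_m)_{m\ge0}$ and $(b_n)_{n\ge0}$ be real sequences and let $f(x)=e^{-x/2}\sum_{m=0}^\infty a_mL_m(x)$, $g(x)=e^{-x/2}\sum_{n=0}^\infty b_nL_n(x)$ for $x\in[0,\infty)$, and $h(x)=\int_0^x f(x-t)g(t)\,\mathrm{d}t$. Computing the convolution termwise, $h(x)=e^{-x/2}\sum_{k=0}^\infty c_kL_k(x)$ with $\underline c=R^L\underline b$, where $R^L$ is the infinite matrix with entries $$R^L_{k,n}=a_{k-n}-a_{k-n-1}\qquad(k,n\ge0),\quad a_j:=0\text{ for }j<0,$$ i.e. $R^L$ is the lower triangular Toeplitz matrix with first column $(a_0,a_1,a_2,\dots)^T$ minus the same matrix shifted down by one row (first column $(0,a_0,a_1,\dots)^T$).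
   Context: $L_n$ denotes the Laguerre polynomial of degree $n$, $L_n(x)=\sum_{j=0}^n\binom{n}{j}\frac{(-x)^j}{j!}$; $e^{-x/2}L_n(x)$ are the weighted Laguerre functions. $\underline b=(b_0,b_1,\dots)^T$, $\underline c=(c_0,c_1,\dots)^T$. *)

theory Defs
  imports "HOL-Analysis.Analysis"
begin

definition laguerre :: "nat \<Rightarrow> real \<Rightarrow> real" where
  "laguerre n x = (\<Sum>j = 0..n. real (n choose j) * (- x) ^ j / fact j)"

definition coeff_ext :: "(nat \<Rightarrow> real) \<Rightarrow> int \<Rightarrow> real" where
  "coeff_ext a j = (if j < 0 then 0 else a (nat j))"

definition RL :: "(nat \<Rightarrow> real) \<Rightarrow> nat \<Rightarrow> nat \<Rightarrow> real" where
  "RL a k n = coeff_ext a (int k - int n) - coeff_ext a (int k - int n - 1)"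

end

theory Submission
  imports Defs "HOL-Complex_Analysis.Cauchy_Integral_Formula"
begin

(* Expanding the Laguerre polynomials into monomials, the beta integral
   int_0^x (x-t)^i/i! t^j/j! dt = x^(i+j+1)/(i+j+1)! and Vandermonde's identity give
   int_0^x L_m(x-t) L_n(t) dt = L_(m+n)(x) - L_(m+n+1)(x), and the same for the weighted functions
   phi_n(x) = e^(-x/2) L_n(x).  Multiplying out the two series, with d the Cauchy product of a and b,
   h(x) = sum_k d_k (phi_k(x) - phi_(k+1)(x)); summation by parts turns this into
   sum_k (d_k - d_(k-1)) phi_k(x) = sum_k c_k phi_k(x), because (R^L b)_k = d_k - d_(k-1).
   Termwise integration is justified by dominated convergence, using |phi_n(x)| <= 1 for x >= 0.
   That bound comes from Cauchy's formula L_n(x) = (2 pi i)^(-1) oint e^u (1 - x/u)^n du/u on the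
   circle |u| = sqrt(n x), where the integrand is at most e^(x/2) / |u|. *)

lemma sum_atMost_Suc_choose:
  fixes u :: "nat \<Rightarrow> 'a::comm_semiring_1"
  shows "(\<Sum>k\<le>Suc n. of_nat (Suc n choose k) * u k) =
         (\<Sum>k\<le>n. of_nat (n choose k) * u k) + (\<Sum>k\<le>n. of_nat (n choose k) * u (Suc k))"
proof -
  have "(\<Sum>k\<le>Suc n. of_nat (Suc n choose k) * u k)
      = (u 0 + (\<Sum>k\<le>n. of_nat (n choose Suc k) * u (Suc k))) + (\<Sum>k\<le>n. of_nat (n choose k) * u (Suc k))"
    by (subst sum.atMost_Suc_shift) (simp add: sum.distrib algebra_simps)
  also have "u 0 + (\<Sum>k\<le>n. of_nat (n choose Suc k) * u (Suc k)) = (\<Sum>k\<le>Suc n. of_nat (n choose k) * u k)"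
    by (subst sum.atMost_Suc_shift) simp
  also have "\<dots> = (\<Sum>k\<le>n. of_nat (n choose k) * u k)"
    by (simp add: binomial_eq_0)
  finally show ?thesis .
qed

lemma vandermonde_weighted:
  fixes g :: "nat \<Rightarrow> 'a::comm_semiring_1"
  shows "(\<Sum>i\<le>m. \<Sum>j\<le>n. of_nat (m choose i) * of_nat (n choose j) * g (i + j)) =
         (\<Sum>k\<le>m + n. of_nat ((m + n) choose k) * g k)"
proof (induction m arbitrary: g)
  case 0
  then show ?case by simp
next
  case (Suc m)
  have "(\<Sum>i\<le>Suc m. \<Sum>j\<le>n. of_nat (Suc m choose i) * of_nat (n choose j) * g (i + j))
      = (\<Sum>j\<le>n. of_nat (n choose j) * (\<Sum>i\<le>Suc m. of_nat (Suc m choose i) * g (i + j)))"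
    by (subst sum.swap) (simp add: sum_distrib_left algebra_simps)
  also have "\<dots> = (\<Sum>j\<le>n. of_nat (n choose j) * (\<Sum>i\<le>m. of_nat (m choose i) * (g (i + j) + g (Suc i + j))))"
    unfolding sum_atMost_Suc_choose by (simp add: sum.distrib distrib_left)
  also have "\<dots> = (\<Sum>i\<le>m. \<Sum>j\<le>n. of_nat (m choose i) * of_nat (n choose j) * (g (i + j) + g (Suc (i + j))))"
    by (subst sum.swap) (simp add: sum_distrib_left algebra_simps)
  also have "\<dots> = (\<Sum>k\<le>m + n. of_nat ((m + n) choose k) * (g k + g (Suc k)))"
    using Suc.IH[of "\<lambda>k. g k + g (Suc k)"] by simp
  also have "\<dots> = (\<Sum>k\<le>Suc m + n. of_nat ((Suc m + n) choose k) * g k)"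
    using sum_atMost_Suc_choose[of "m + n" g] by (simp add: sum.distrib distrib_left)
  finally show ?case .
qed

lemma has_real_derivative_power_div_fact:
  "((\<lambda>t::real. t ^ Suc j / fact (Suc j)) has_real_derivative t ^ j / fact j) (at t)"
  using DERIV_cdivide[OF DERIV_pow[of "Suc j" t], of "fact (Suc j)"]
  by (simp add: fact_Suc del: of_nat_Suc)

lemma has_real_derivative_reflected_power_div_fact:
  "((\<lambda>t::real. (x - t) ^ Suc i / fact (Suc i)) has_real_derivative - ((x - t) ^ i / fact i)) (at t)"
proof -
  have "((\<lambda>t. (x - t) ^ Suc i) has_real_derivative real (Suc i) * (x - t) ^ i * -1) (at t)"
    by (rule DERIV_cong[OF DERIV_power[OF DERIV_diff[OF DERIV_const DERIV_ident]]]) simp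
  from DERIV_cdivide[OF this, of "fact (Suc i)"] show ?thesis
    by (simp add: fact_Suc del: of_nat_Suc)
qed

lemma monomial_convolution_has_integral:
  fixes x :: real
  assumes "0 \<le> x"
  shows "((\<lambda>t. (x - t) ^ i / fact i * (t ^ j / fact j)) has_integral x ^ (i + j + 1) / fact (i + j + 1)) {0..x}"
proof (induction i arbitrary: j)
  case 0
  have "((\<lambda>t. t ^ j / fact j) has_integral x ^ Suc j / fact (Suc j) - 0 ^ Suc j / fact (Suc j)) {0..x}"
    by (intro fundamental_theorem_of_calculus[OF assms] has_vector_derivative_at_within[OF
        has_real_derivative_power_div_fact[THEN has_real_derivative_iff_has_vector_derivative[THEN iffD1]]])
  then show ?case by simp
next
  case (Suc i)
  \<comment> \<open>integration by parts; the boundary term ?G vanishes at both ends\<close>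
  let ?G = "\<lambda>t. (x - t) ^ Suc i / fact (Suc i) * (t ^ Suc j / fact (Suc j))"
  have "((\<lambda>t. - ((x - t) ^ i / fact i) * (t ^ Suc j / fact (Suc j)) + t ^ j / fact j * ((x - t) ^ Suc i / fact (Suc i)))
      has_integral ?G x - ?G 0) {0..x}"
    by (intro fundamental_theorem_of_calculus[OF assms] has_vector_derivative_at_within[OF
        DERIV_mult[OF has_real_derivative_reflected_power_div_fact has_real_derivative_power_div_fact,
          THEN has_real_derivative_iff_has_vector_derivative[THEN iffD1]]])
  then have "((\<lambda>t. - ((x - t) ^ i / fact i) * (t ^ Suc j / fact (Suc j)) + t ^ j / fact j * ((x - t) ^ Suc i / fact (Suc i)))
      has_integral 0) {0..x}"
    by simp
  from has_integral_add[OF this Suc.IH[of "Suc j"]] show ?case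
    by (simp add: mult.commute)
qed

lemma laguerre_altdef: "laguerre n x = (\<Sum>k\<le>n. of_nat (n choose k) * ((- x) ^ k / fact k))"
  unfolding laguerre_def atLeast0AtMost by (simp add: mult.assoc)

lemma laguerre_diff_Suc:
  "laguerre n x - laguerre (Suc n) x = (\<Sum>k\<le>n. of_nat (n choose k) * ((- 1) ^ k * x ^ (k + 1) / fact (k + 1)))"
proof -
  have "laguerre (Suc n) x = laguerre n x + (\<Sum>k\<le>n. of_nat (n choose k) * ((- x) ^ Suc k / fact (Suc k)))"
    unfolding laguerre_altdef by (rule sum_atMost_Suc_choose)
  then show ?thesis
    by (simp add: sum_negf[symmetric] power_minus[of x] ac_simps)
qed

lemma laguerre_convolution_has_integral:
  fixes x :: real
  assumes "0 \<le> x"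
  shows "((\<lambda>t. laguerre m (x - t) * laguerre n t) has_integral laguerre (m + n) x - laguerre (Suc (m + n)) x) {0..x}"
proof -
  define g where "g k = (- 1) ^ k * x ^ (k + 1) / fact (k + 1)" for k :: nat
  have "laguerre m (x - t) * laguerre n t =
      (\<Sum>i\<le>m. \<Sum>j\<le>n. (of_nat (m choose i) * of_nat (n choose j) * (- 1) ^ (i + j)) *
        ((x - t) ^ i / fact i * (t ^ j / fact j)))" for t
    unfolding laguerre_altdef sum_product power_minus[of "x - t"] power_minus[of t]
    by (intro sum.cong refl) (simp add: power_add mult_ac)
  moreover have "((\<lambda>t. \<Sum>i\<le>m. \<Sum>j\<le>n. (of_nat (m choose i) * of_nat (n choose j) * (- 1) ^ (i + j)) *
        ((x - t) ^ i / fact i * (t ^ j / fact j))) has_integral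
      (\<Sum>i\<le>m. \<Sum>j\<le>n. of_nat (m choose i) * of_nat (n choose j) * g (i + j))) {0..x}"
    unfolding g_def
    by (intro has_integral_sum finite_atMost ballI
        has_integral_mult_right[OF monomial_convolution_has_integral[OF assms], THEN has_integral_eq_rhs])
      simp
  moreover have "(\<Sum>i\<le>m. \<Sum>j\<le>n. of_nat (m choose i) * of_nat (n choose j) * g (i + j)) =
      (\<Sum>k\<le>m + n. of_nat ((m + n) choose k) * g k)"
    by (rule vandermonde_weighted)
  moreover have "\<dots> = laguerre (m + n) x - laguerre (Suc (m + n)) x"
    unfolding laguerre_diff_Suc g_def ..
  ultimately show ?thesis by simp
qed

lemma higher_deriv_exp: "(deriv ^^ k) exp = (exp :: complex \<Rightarrow> complex)"
proof (induction k)
  case (Suc k)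
  have "deriv exp = (exp :: complex \<Rightarrow> complex)"
    by (rule ext) (rule DERIV_imp_deriv[OF DERIV_exp])
  with Suc show ?case by simp
qed simp

lemma exp_div_power_has_contour_integral_circlepath:
  assumes "0 < r"
  shows "((\<lambda>u. exp u / u ^ Suc k) has_contour_integral 2 * pi * \<i> / fact k) (circlepath 0 r)"
proof -
  have "((\<lambda>u. exp u / (u - 0) ^ Suc k) has_contour_integral 2 * pi * \<i> / fact k * (deriv ^^ k) exp 0)
      (circlepath 0 r)"
    by (rule Cauchy_has_contour_integral_higher_derivative_circlepath)
      (auto intro!: continuous_intros holomorphic_intros simp: assms)
  then show ?thesis
    by (simp add: higher_deriv_exp)
qed

lemma laguerre_has_contour_integral_circlepath:
  assumes "0 < r"
  shows "((\<lambda>u. exp u * (1 - of_real x / u) ^ n / u) has_contour_integral 2 * pi * \<i> * of_real (laguerre n x))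
           (circlepath 0 r)"
proof -
  have "((\<lambda>u. \<Sum>k\<le>n. of_nat (n choose k) * (- of_real x) ^ k * (exp u / u ^ Suc k)) has_contour_integral
      (\<Sum>k\<le>n. of_nat (n choose k) * (- of_real x) ^ k * (2 * pi * \<i> / fact k))) (circlepath 0 r)"
    by (intro has_contour_integral_sum finite_atMost has_contour_integral_lmul
        exp_div_power_has_contour_integral_circlepath assms)
  moreover have "(\<Sum>k\<le>n. of_nat (n choose k) * (- of_real x) ^ k * (2 * pi * \<i> / fact k)) =
      2 * pi * \<i> * of_real (laguerre n x)"
    by (simp add: laguerre_altdef sum_distrib_left mult_ac)
  moreover have "(\<Sum>k\<le>n. of_nat (n choose k) * (- of_real x) ^ k * (exp u / u ^ Suc k)) =
      exp u * (1 - of_real x / u) ^ n / u" if "u \<in> path_image (circlepath 0 r)" for u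
  proof -
    have "u \<noteq> 0"
      using that assms by auto
    have "(1 - of_real x / u) ^ n = (\<Sum>k\<le>n. of_nat (n choose k) * ((- of_real x) ^ k / u ^ k))"
      unfolding power_divide[symmetric] using binomial_ring[of "- of_real x / u" 1 n] by (simp add: mult_ac)
    with \<open>u \<noteq> 0\<close> show ?thesis
      by (simp add: sum_distrib_left sum_divide_distrib field_simps)
  qed
  ultimately show ?thesis
    by (auto intro: has_contour_integral_eq)
qed

lemma norm_exp_mult_power_le:
  fixes u :: complex
  assumes "u \<noteq> 0" and "norm u ^ 2 = real n * x"
  shows "norm (exp u) * norm (1 - of_real x / u) ^ n \<le> exp (x / 2)"
proof -
  define q where "q = (x ^ 2 - 2 * x * Re u) / norm u ^ 2"
  have "norm (1 - of_real x / u) ^ 2 = norm (u - of_real x) ^ 2 / norm u ^ 2"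
    using assms(1) by (simp add: norm_divide power_divide diff_divide_distrib[symmetric] field_simps)
  also have "norm (u - of_real x) ^ 2 = norm u ^ 2 + (x ^ 2 - 2 * x * Re u)"
    unfolding cmod_power2 by (simp add: power2_eq_square algebra_simps)
  finally have norm_sq: "norm (1 - of_real x / u) ^ 2 = 1 + q"
    using assms(1) by (simp add: q_def field_simps)
  have "real n * x \<noteq> 0"
    using assms by (metis norm_eq_zero zero_eq_power2)
  then have "real n * q = x - 2 * Re u"
    by (simp add: q_def assms(2) field_simps power2_eq_square[of x])
  \<comment> \<open>since n q = x - 2 Re u, the bound (1 + q)^n \<le> e^(n q) cancels the factor |e^u| = e^(Re u)\<close>
  have "(norm (1 - of_real x / u) ^ n) ^ 2 = (1 + q) ^ n"
    by (metis norm_sq power_mult mult.commute)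
  also have "\<dots> \<le> exp q ^ n"
    using norm_sq by (intro power_mono exp_ge_add_one_self) (metis zero_le_power2)
  also have "\<dots> = exp (x / 2 - Re u) ^ 2"
    by (simp add: \<open>real n * q = x - 2 * Re u\<close> flip: exp_of_nat_mult)
  finally have "norm (1 - of_real x / u) ^ n \<le> exp (x / 2 - Re u)"
    by (rule power2_le_imp_le) simp
  then have "exp (Re u) * norm (1 - of_real x / u) ^ n \<le> exp (Re u) * exp (x / 2 - Re u)"
    by simp
  then show ?thesis
    by (simp flip: exp_add)
qed

lemma abs_laguerre_le_exp:
  assumes "0 \<le> x"
  shows "\<bar>laguerre n x\<bar> \<le> exp (x / 2)"
proof (cases "n = 0 \<or> x = 0")
  case True
  then have "laguerre n x = 1"
    by (auto simp: laguerre_altdef zero_power)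
  then show ?thesis
    using assms by simp
next
  case False
  define r where "r = sqrt (real n * x)"
  have "0 < r" "r ^ 2 = real n * x"
    using False assms by (auto simp: r_def)
  have "norm (2 * pi * \<i> * of_real (laguerre n x)) \<le> exp (x / 2) / r * (2 * pi * r)"
  proof (rule has_contour_integral_bound_circlepath[OF laguerre_has_contour_integral_circlepath[OF \<open>0 < r\<close>]])
    fix u :: complex
    assume "norm (u - 0) = r"
    with \<open>0 < r\<close> \<open>r ^ 2 = real n * x\<close> have "u \<noteq> 0" "norm u ^ 2 = real n * x"
      by auto
    then have "norm (exp u) * norm (1 - of_real x / u) ^ n \<le> exp (x / 2)"
      by (rule norm_exp_mult_power_le)
    with \<open>norm (u - 0) = r\<close> \<open>0 < r\<close> show "norm (exp u * (1 - of_real x / u) ^ n / u) \<le> exp (x / 2) / r"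
      by (simp add: norm_mult norm_divide norm_power divide_right_mono)
  qed (use \<open>0 < r\<close> in simp_all)
  with \<open>0 < r\<close> show ?thesis
    by (simp add: norm_mult)
qed

definition laguerre_function :: "nat \<Rightarrow> real \<Rightarrow> real" where
  "laguerre_function n x = exp (- x / 2) * laguerre n x"

lemma abs_laguerre_function_le_1:
  assumes "0 \<le> x"
  shows "\<bar>laguerre_function n x\<bar> \<le> 1"
proof -
  have "\<bar>laguerre_function n x\<bar> \<le> exp (- x / 2) * exp (x / 2)"
    unfolding laguerre_function_def abs_mult
    using abs_laguerre_le_exp[OF assms] by (simp add: mult_left_mono)
  then show ?thesis
    by (simp flip: exp_add)
qed

lemma laguerre_function_convolution_has_integral:
  fixes x :: real
  assumes "0 \<le> x"
  shows "((\<lambda>t. laguerre_function m (x - t) * laguerre_function n t) has_integral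
          laguerre_function (m + n) x - laguerre_function (Suc (m + n)) x) {0..x}"
proof -
  have "((\<lambda>t. exp (- x / 2) * (laguerre m (x - t) * laguerre n t)) has_integral
      exp (- x / 2) * (laguerre (m + n) x - laguerre (Suc (m + n)) x)) {0..x}"
    by (rule has_integral_mult_right[OF laguerre_convolution_has_integral[OF assms]])
  moreover have "exp (- x / 2) * (laguerre m (x - t) * laguerre n t) =
      laguerre_function m (x - t) * laguerre_function n t" for t
  proof -
    have "exp (- (x - t) / 2) * exp (- t / 2) = exp (- x / 2)"
      by (simp flip: exp_add add: field_simps)
    then show ?thesis
      unfolding laguerre_function_def by (metis mult.assoc mult.left_commute)
  qed
  moreover have "exp (- x / 2) * (laguerre (m + n) x - laguerre (Suc (m + n)) x) =
      laguerre_function (m + n) x - laguerre_function (Suc (m + n)) x"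
    by (simp add: laguerre_function_def right_diff_distrib)
  ultimately show ?thesis
    by simp
qed

lemma summable_norm_laguerre_function_series:
  assumes "summable (\<lambda>n. \<bar>u n\<bar>)" and "0 \<le> x"
  shows "summable (\<lambda>n. norm (u n * laguerre_function n x))"
proof (rule summable_comparison_test'[OF assms(1)])
  show "norm (norm (u n * laguerre_function n x)) \<le> \<bar>u n\<bar>" for n
    using abs_laguerre_function_le_1[OF assms(2), of n]
    by (simp add: abs_mult mult_left_le)
qed

lemma laguerre_function_series_sums:
  assumes "summable (\<lambda>n. \<bar>u n\<bar>)" and "0 \<le> x"
  shows "(\<lambda>n. u n * laguerre_function n x) sums (exp (- x / 2) * (\<Sum>n. u n * laguerre n x))"
proof -
  have "summable (\<lambda>n. u n * laguerre_function n x)"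
    using summable_norm_laguerre_function_series[OF assms] by (rule summable_norm_cancel)
  then have "summable (\<lambda>n. exp (x / 2) * (u n * laguerre_function n x))"
    by (rule summable_mult)
  moreover have "exp (x / 2) * (u n * laguerre_function n x) = u n * laguerre n x" for n
    by (simp add: laguerre_function_def flip: exp_add)
  ultimately have "(\<lambda>n. exp (- x / 2) * (u n * laguerre n x)) sums (exp (- x / 2) * (\<Sum>n. u n * laguerre n x))"
    by (intro sums_mult summable_sums) simp
  then show ?thesis
    by (simp add: laguerre_function_def mult_ac)
qed

lemma summable_norm_Cauchy_product:
  fixes a b :: "nat \<Rightarrow> 'a::{real_normed_algebra,banach}"
  assumes "summable (\<lambda>k. norm (a k))" and "summable (\<lambda>k. norm (b k))"
  shows "summable (\<lambda>k. norm (\<Sum>i\<le>k. a i * b (k - i)))"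
proof (rule summable_comparison_test'[OF summable_Cauchy_product[of "\<lambda>k. norm (a k)" "\<lambda>k. norm (b k)"]])
  show "norm (norm (\<Sum>i\<le>k. a i * b (k - i))) \<le> (\<Sum>i\<le>k. norm (a i) * norm (b (k - i)))" for k
    by (simp add: norm_sum norm_mult_ineq sum_mono order.trans[OF norm_sum])
qed (use assms in simp_all)

lemma has_integral_sums_dominated:
  fixes u :: "nat \<Rightarrow> 'n::euclidean_space \<Rightarrow> 'm::euclidean_space"
  assumes has_int: "\<And>k. (u k has_integral I k) (cbox a b)"
    and bound: "\<And>k t. t \<in> cbox a b \<Longrightarrow> norm (u k t) \<le> B k"
    and "summable B"
    and conv: "\<And>t. t \<in> cbox a b \<Longrightarrow> (\<lambda>k. u k t) sums s t"
  shows "I sums integral (cbox a b) s"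
proof -
  have partial_bound: "norm (\<Sum>k<N. u k t) \<le> suminf B" if "t \<in> cbox a b" for N t
  proof -
    have "norm (\<Sum>k<N. u k t) \<le> (\<Sum>k<N. B k)"
      using bound[OF that] by (intro order.trans[OF norm_sum] sum_mono)
    also have "\<dots> \<le> suminf B"
      using bound[OF that] \<open>summable B\<close> by (intro sum_le_suminf) (auto intro: order.trans[OF norm_ge_zero])
    finally show ?thesis .
  qed
  have "(\<lambda>N. integral (cbox a b) (\<lambda>t. \<Sum>k<N. u k t)) \<longlonglongrightarrow> integral (cbox a b) s"
    using has_int partial_bound conv
    by (intro dominated_convergence(2)[where h = "\<lambda>_. suminf B"])
      (auto simp: sums_def intro!: integrable_sum integrable_const)
  moreover have "integral (cbox a b) (\<lambda>t. \<Sum>k<N. u k t) = (\<Sum>k<N. I k)" for N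
    using has_int by (intro integral_unique has_integral_sum) auto
  ultimately show ?thesis
    by (simp add: sums_def)
qed

lemma RL_altdef: "RL a k n = (if n \<le> k then a (k - n) else 0) - (if n < k then a (k - 1 - n) else 0)"
  unfolding RL_def coeff_ext_def by (auto simp: nat_diff_distrib' of_nat_diff)

lemma suminf_RL_mult:
  "(\<Sum>n. RL a k n * b n) = (\<Sum>i\<le>k. b i * a (k - i)) - (\<Sum>i<k. b i * a (k - 1 - i))"
proof -
  have "(\<Sum>n. RL a k n * b n) = (\<Sum>n\<le>k. RL a k n * b n)"
    by (rule suminf_finite) (auto simp: RL_altdef)
  also have "\<dots> = (\<Sum>i\<le>k. b i * a (k - i) - (if i < k then b i * a (k - 1 - i) else 0))"
    by (intro sum.cong refl) (auto simp: RL_altdef algebra_simps)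
  also have "\<dots> = (\<Sum>i\<le>k. b i * a (k - i)) - (\<Sum>i\<le>k. if i < k then b i * a (k - 1 - i) else 0)"
    by (rule sum_subtractf)
  also have "(\<Sum>i\<le>k. if i < k then b i * a (k - 1 - i) else 0) = (\<Sum>i<k. b i * a (k - 1 - i))"
    by (simp add: sum.If_cases Int_absorb1 subset_eq flip: lessThan_def)
  finally show ?thesis .
qed

lemma sums_summation_by_parts:
  fixes d e p :: "nat \<Rightarrow> 'a::real_normed_algebra"
  assumes "summable (\<lambda>k. d k * p k)" and "summable (\<lambda>k. d k * p (Suc k))"
    and "e 0 = 0" and "\<And>k. e (Suc k) = d k"
  shows "(\<lambda>k. (d k - e k) * p k) sums (\<Sum>k. d k * (p k - p (Suc k)))"
proof -
  have "(\<lambda>k. e (Suc k) * p (Suc k)) sums (\<Sum>k. d k * p (Suc k))"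
    using assms(2,4) by (simp add: summable_sums)
  then have "(\<lambda>k. e k * p k) sums ((\<Sum>k. d k * p (Suc k)) + e 0 * p 0)"
    by (rule sums_Suc_iff[THEN iffD1])
  then have "(\<lambda>k. e k * p k) sums (\<Sum>k. d k * p (Suc k))"
    using assms(3) by simp
  from sums_diff[OF summable_sums[OF assms(1)] this]
  have "(\<lambda>k. (d k - e k) * p k) sums ((\<Sum>k. d k * p k) - (\<Sum>k. d k * p (Suc k)))"
    by (simp add: left_diff_distrib)
  also have "(\<Sum>k. d k * p k) - (\<Sum>k. d k * p (Suc k)) = (\<Sum>k. d k * (p k - p (Suc k)))"
    using suminf_diff[OF assms(1,2)] by (simp add: right_diff_distrib)
  finally show ?thesis .
qed

lemma abs_mult_laguerre_function_le:
  assumes "0 \<le> s" and "0 \<le> t"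
  shows "\<bar>(\<beta> * laguerre_function i s) * (\<alpha> * laguerre_function j t)\<bar> \<le> \<bar>\<beta>\<bar> * \<bar>\<alpha>\<bar>"
proof -
  have "\<bar>laguerre_function i s\<bar> * \<bar>laguerre_function j t\<bar> \<le> 1"
    using assms by (intro mult_le_one abs_laguerre_function_le_1) auto
  then have "(\<bar>\<beta>\<bar> * \<bar>\<alpha>\<bar>) * (\<bar>laguerre_function i s\<bar> * \<bar>laguerre_function j t\<bar>) \<le> \<bar>\<beta>\<bar> * \<bar>\<alpha>\<bar>"
    by (rule mult_left_le) simp
  then show ?thesis
    by (simp add: abs_mult mult_ac)
qed

lemma laguerre_function_Cauchy_product_has_integral:
  fixes x :: real
  assumes "0 \<le> x"
  shows "((\<lambda>t. \<Sum>i\<le>k. (b i * laguerre_function i t) * (a (k - i) * laguerre_function (k - i) (x - t)))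
    has_integral (\<Sum>i\<le>k. b i * a (k - i)) * (laguerre_function k x - laguerre_function (Suc k) x)) {0..x}"
proof -
  have "((\<lambda>t. \<Sum>i\<le>k. (b i * a (k - i)) * (laguerre_function (k - i) (x - t) * laguerre_function i t)) has_integral
      (\<Sum>i\<le>k. (b i * a (k - i)) * (laguerre_function (k - i + i) x - laguerre_function (Suc (k - i + i)) x))) {0..x}"
    by (intro has_integral_sum finite_atMost has_integral_mult_right
        laguerre_function_convolution_has_integral assms)
  then show ?thesis
    unfolding sum_distrib_right by (simp add: mult_ac)
qed

lemma laguerre_series_convolution_sums:
  fixes a b :: "nat \<Rightarrow> real"
  assumes a: "summable (\<lambda>m. \<bar>a m\<bar>)" and b: "summable (\<lambda>n. \<bar>b n\<bar>)"
    and f: "\<And>y. 0 \<le> y \<Longrightarrow> f y = exp (- y / 2) * (\<Sum>m. a m * laguerre m y)"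
    and g: "\<And>y. 0 \<le> y \<Longrightarrow> g y = exp (- y / 2) * (\<Sum>n. b n * laguerre n y)"
    and "0 \<le> x"
  shows "(\<lambda>k. (\<Sum>i\<le>k. b i * a (k - i)) * (laguerre_function k x - laguerre_function (Suc k) x)) sums
    integral {0..x} (\<lambda>t. f (x - t) * g t)"
proof -
  define u where "u k t = (\<Sum>i\<le>k. (b i * laguerre_function i t) * (a (k - i) * laguerre_function (k - i) (x - t)))"
    for k t
  have "(u k has_integral (\<Sum>i\<le>k. b i * a (k - i)) * (laguerre_function k x - laguerre_function (Suc k) x))
      {0..x}" for k
    unfolding u_def by (rule laguerre_function_Cauchy_product_has_integral[OF \<open>0 \<le> x\<close>])
  moreover have "norm (u k t) \<le> (\<Sum>i\<le>k. \<bar>b i\<bar> * \<bar>a (k - i)\<bar>)" if "t \<in> {0..x}" for k t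
    unfolding u_def real_norm_def using that
    by (intro order.trans[OF sum_abs] sum_mono abs_mult_laguerre_function_le) auto
  moreover have "summable (\<lambda>k. \<Sum>i\<le>k. \<bar>b i\<bar> * \<bar>a (k - i)\<bar>)"
    using summable_Cauchy_product[of "\<lambda>i. \<bar>b i\<bar>" "\<lambda>i. \<bar>a i\<bar>"] a b by simp
  moreover have "(\<lambda>k. u k t) sums (f (x - t) * g t)" if "t \<in> {0..x}" for t
  proof -
    have "0 \<le> t" "0 \<le> x - t"
      using that by auto
    from Cauchy_product_sums[OF summable_norm_laguerre_function_series[OF b \<open>0 \<le> t\<close>]
        summable_norm_laguerre_function_series[OF a \<open>0 \<le> x - t\<close>]]
    show ?thesis
      unfolding u_def f[OF \<open>0 \<le> x - t\<close>] g[OF \<open>0 \<le> t\<close>]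
        sums_unique[OF laguerre_function_series_sums[OF b \<open>0 \<le> t\<close>], symmetric]
        sums_unique[OF laguerre_function_series_sums[OF a \<open>0 \<le> x - t\<close>], symmetric]
      by (simp add: mult.commute)
  qed
  ultimately show ?thesis
    by (rule has_integral_sums_dominated[of u _ 0 x, unfolded cbox_interval])
qed

theorem theorem5p2:
  fixes a b c :: "nat \<Rightarrow> real" and f g h :: "real \<Rightarrow> real"
  assumes a_sum: "summable (\<lambda>m. \<bar>a m\<bar>)"
    and b_sum: "summable (\<lambda>n. \<bar>b n\<bar>)"
    and f_def: "\<And>x. x \<ge> 0 \<Longrightarrow> f x = exp (- x / 2) * (\<Sum>m. a m * laguerre m x)"
    and g_def: "\<And>x. x \<ge> 0 \<Longrightarrow> g x = exp (- x / 2) * (\<Sum>n. b n * laguerre n x)"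
    and h_def: "\<And>x. x \<ge> 0 \<Longrightarrow> h x = integral {0..x} (\<lambda>t. f (x - t) * g t)"
    and c_def: "\<And>k. c k = (\<Sum>n. RL a k n * b n)"
  shows "\<forall>x \<ge> 0. summable (\<lambda>k. c k * laguerre k x) \<and>
           h x = exp (- x / 2) * (\<Sum>k. c k * laguerre k x)"
proof (intro allI impI)
  fix x :: real
  assume "0 \<le> x"
  define d where "d k = (\<Sum>i\<le>k. b i * a (k - i))" for k
  have d_sum: "summable (\<lambda>k. \<bar>d k\<bar>)"
    using summable_norm_Cauchy_product[of b a] a_sum b_sum by (simp add: d_def)
  have "summable (\<lambda>k. d k * laguerre_function (j k) x)" for j
    by (rule summable_comparison_test'[OF d_sum])
      (simp add: abs_mult mult_left_le abs_laguerre_function_le_1 \<open>0 \<le> x\<close>)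
  from this[of "\<lambda>k. k"] this[of Suc]
  have "(\<lambda>k. c k * laguerre_function k x) sums
      (\<Sum>k. d k * (laguerre_function k x - laguerre_function (Suc k) x))"
    unfolding c_def suminf_RL_mult d_def[symmetric]
    by (rule sums_summation_by_parts) (simp_all add: d_def lessThan_Suc_atMost)
  also have "(\<Sum>k. d k * (laguerre_function k x - laguerre_function (Suc k) x)) = h x"
    using sums_unique[OF laguerre_series_convolution_sums[OF a_sum b_sum f_def g_def \<open>0 \<le> x\<close>]]
    by (simp add: d_def h_def[OF \<open>0 \<le> x\<close>])
  finally have "(\<lambda>k. exp (x / 2) * (c k * laguerre_function k x)) sums (exp (x / 2) * h x)"
    by (rule sums_mult)
  then have "(\<lambda>k. c k * laguerre k x) sums (exp (x / 2) * h x)"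
    by (simp add: laguerre_function_def mult_ac flip: exp_add)
  then show "summable (\<lambda>k. c k * laguerre k x) \<and> h x = exp (- x / 2) * (\<Sum>k. c k * laguerre k x)"
    by (simp add: sums_iff mult.assoc flip: exp_add)
qed

end
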